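(* Let $n\in\mathbf{N}$ and $A\subset[n]$ have property P. Then for each $i\in\{1,3\}$, $$\left|A\cap\left(\tfrac n4,\tfrac n3\right]\cap(1+2\mathbf{Z})\right|+\left|A\cap\left(\tfrac{2n}{3},n\right]\cap(i+4\mathbf{Z})\right|\leqslant\frac{n}{12}+3.$$
   Context: A set $A\subset\mathbf{N}$ has property P if there are no $x,y,z\in A$ (not necessarily distinct $x,y$) with $z<x$, $z<y$ and $z\mid x+y$. Intervals denote sets of integers. *)

theory Defs
  imports Complex_Main "HOL-Number_Theory.Cong"
begin

definition propP :: "nat set \<Rightarrow> bool" where
  "propP A \<longleftrightarrow> A \<subseteq> {1..} \<and>
     \<not> (\<exists>x\<in>A. \<exists>y\<in>A. \<exists>z\<in>A. z < x \<and> z < y \<and> z dvd (x + y))"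

end

theory Submission
  imports Defs
begin

text \<open>For odd \<open>b \<in> A\<close>, one of \<open>3b - 2, 3b, 3b + 2\<close> lies in the odd residue class \<open>i\<close> mod 4 and
  is missing from \<open>A\<close>: \<open>3b \<notin> A\<close> since \<open>b\<close> divides \<open>3b + 3b\<close>, and if \<open>3b\<close> is not in the class
  then \<open>3b \<plusminus> 2\<close> both are, and they cannot both lie in \<open>A\<close> since \<open>b\<close> divides their sum.
  Except for at most two odd \<open>b \<in> (n/4, n/3]\<close> (those with \<open>9b \<le> 2n + 6\<close> or \<open>3b + 2 > n\<close>), these
  three numbers lie in \<open>(2n/3, n]\<close>, and they are distinct for distinct \<open>b\<close>. So the odd elements of
  \<open>A \<inter> (n/4, n/3]\<close>, up to two, inject into the residue class \<open>i\<close> of \<open>(2n/3, n]\<close> minus \<open>A\<close>, a class of at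
  most \<open>n/12 + 1\<close> numbers.\<close>

lemma propP_not_dvd_sum:
  assumes "propP A" "x \<in> A" "y \<in> A" "z \<in> A" "z < x" "z < y"
  shows "\<not> z dvd x + y"
  using assms unfolding propP_def by blast

lemma propP_obtains_missing_neighbour:
  fixes r :: nat
  assumes P: "propP A" and b: "b \<in> A" "1 < b" "odd b" and r: "r \<in> {1, 3}"
  obtains y where "y \<in> {3*b - 2, 3*b, 3*b + 2}" "y mod 4 = r" "y \<notin> A"
proof (cases "(3*b) mod 4 = r")
  case True
  have "b dvd 3*b + 3*b" "b < 3*b" using b(2) by simp_all
  then have "3*b \<notin> A" using propP_not_dvd_sum[OF P _ _ b(1)] by blast
  with True show ?thesis using that by blast
next
  case False
  have "r = 1 \<or> r = 3" using r by simp
  then have "(3*b + 2) mod 4 = r" using False b(3) by presburger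
  moreover have "(3*b - 2) + 4 = 3*b + 2" using b(2) by simp
  ultimately have classes: "(3*b + 2) mod 4 = r" "(3*b - 2) mod 4 = r"
    by (metis mod_add_self2)+
  have "(3*b + 2) + (3*b - 2) = 6*b" using b(2) by simp
  then have "b dvd (3*b + 2) + (3*b - 2)" by (metis dvd_triv_right)
  moreover have "b < 3*b + 2" "b < 3*b - 2" using b(2) by simp_all
  ultimately have "3*b + 2 \<notin> A \<or> 3*b - 2 \<notin> A" using propP_not_dvd_sum[OF P _ _ b(1)] by blast
  with classes show ?thesis using that by blast
qed

lemma neighbourhoods_of_multiples_of_3_disjoint:
  fixes a b y :: nat
  assumes "y \<in> {3*a - 2, 3*a, 3*a + 2}" "y \<in> {3*b - 2, 3*b, 3*b + 2}" "1 \<le> a" "1 \<le> b"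
  shows "a = b"
  using assms by (auto; presburger)

lemma card_add_le_if_inj_into_diff:
  assumes "finite S" "C \<subseteq> S" "inj_on f B" "f ` B \<subseteq> S - C"
  shows "card C + card B \<le> card S"
proof -
  have "card C + card B = card (C \<union> f ` B)"
    using assms by (subst card_Un_disjoint) (auto intro: finite_subset simp: card_image)
  also have "\<dots> \<le> card S" using assms by (intro card_mono) auto
  finally show ?thesis .
qed

lemma card_residue_class_le:
  fixes k :: nat
  assumes "0 < k"
  shows "card {x. m \<le> x \<and> x \<le> n \<and> x mod k = r} \<le> (n - m) div k + 1"
proof -
  have inj: "inj_on (\<lambda>x. (x - m) div k) {x. m \<le> x \<and> x \<le> n \<and> x mod k = r}"
  proof (rule inj_onI)
    fix x y assume "x \<in> {x. m \<le> x \<and> x \<le> n \<and> x mod k = r}" "y \<in> {x. m \<le> x \<and> x \<le> n \<and> x mod k = r}"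
      and div_eq: "(x - m) div k = (y - m) div k"
    then have "m \<le> x" "m \<le> y" "[x = y] (mod k)" by (auto simp: cong_def)
    then have "(x - m) mod k = (y - m) mod k" by (metis cong_def cong_diff_nat cong_refl)
    with div_eq have "x - m = y - m" by (metis div_mult_mod_eq)
    with \<open>m \<le> x\<close> \<open>m \<le> y\<close> show "x = y" by simp
  qed
  have "(\<lambda>x. (x - m) div k) ` {x. m \<le> x \<and> x \<le> n \<and> x mod k = r} \<subseteq> {..(n - m) div k}"
    by (auto intro: div_le_mono)
  from card_inj_on_le[OF inj this] show ?thesis by simp
qed

lemma odd_nat_distinct_gap:
  fixes a b :: nat
  assumes "odd a" "odd b" "a \<noteq> b"
  shows "a + 2 \<le> b \<or> b + 2 \<le> a"
  using assms by (auto elim!: oddE)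

lemma card_odd_outside_core_le_2:
  fixes n :: nat
  shows "card {b. odd b \<and> n < 4*b \<and> 3*b \<le> n \<and> \<not> (2*n + 6 < 9*b \<and> 3*b + 2 \<le> n)} \<le> 2"
proof -
  let ?X = "{b. 3*b \<le> n \<and> n < 3*b + 2}"
  let ?Y = "{b. odd b \<and> n < 4*b \<and> 9*b \<le> 2*n + 6}"
  have finite: "finite ?X" "finite ?Y" by (auto intro: finite_subset[of _ "{..n}"])
  have "card ?X \<le> 1"
    unfolding One_nat_def card_le_Suc0_iff_eq[OF finite(1)]
  proof (intro ballI)
    fix a b assume "a \<in> ?X" "b \<in> ?X"
    then show "a = b" by simp
  qed
  moreover have "card ?Y \<le> 1"
    unfolding One_nat_def card_le_Suc0_iff_eq[OF finite(2)]
  proof (intro ballI)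
    fix a b assume "a \<in> ?Y" "b \<in> ?Y"
    then show "a = b" using odd_nat_distinct_gap[of a b] by simp
  qed
  moreover have "{b. odd b \<and> n < 4*b \<and> 3*b \<le> n \<and> \<not> (2*n + 6 < 9*b \<and> 3*b + 2 \<le> n)} \<subseteq> ?X \<union> ?Y"
    by auto
  then have "card {b. odd b \<and> n < 4*b \<and> 3*b \<le> n \<and> \<not> (2*n + 6 < 9*b \<and> 3*b + 2 \<le> n)} \<le> card (?X \<union> ?Y)"
    using finite by (intro card_mono) auto
  ultimately show ?thesis using card_Un_le[of ?X ?Y] by linarith
qed

lemma card_odd_le_card_core_add_2:
  fixes n :: nat
  shows "card {x \<in> A. n < 4*x \<and> 3*x \<le> n \<and> odd x}
       \<le> card {b \<in> A. odd b \<and> 2*n + 6 < 9*b \<and> 3*b + 2 \<le> n} + 2"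
proof -
  let ?core = "{b \<in> A. odd b \<and> 2*n + 6 < 9*b \<and> 3*b + 2 \<le> n}"
  let ?out = "{b. odd b \<and> n < 4*b \<and> 3*b \<le> n \<and> \<not> (2*n + 6 < 9*b \<and> 3*b + 2 \<le> n)}"
  have "card {x \<in> A. n < 4*x \<and> 3*x \<le> n \<and> odd x} \<le> card (?core \<union> ?out)"
    by (intro card_mono) (auto intro: finite_subset[of _ "{..n}"])
  also have "\<dots> \<le> card ?core + card ?out" by (rule card_Un_le)
  finally show ?thesis using card_odd_outside_core_le_2[of n] by linarith
qed

lemma propP_card_core_le:
  fixes n r :: nat
  assumes P: "propP A" and r: "r \<in> {1, 3}"
  shows "card {x \<in> A. 2*n < 3*x \<and> x \<le> n \<and> x mod 4 = r}
       + card {b \<in> A. odd b \<and> 2*n + 6 < 9*b \<and> 3*b + 2 \<le> n}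
       \<le> card {x. 2*n < 3*x \<and> x \<le> n \<and> x mod 4 = r}"
proof (rule card_add_le_if_inj_into_diff)
  let ?core = "{b \<in> A. odd b \<and> 2*n + 6 < 9*b \<and> 3*b + 2 \<le> n}"
  define g where "g b = (SOME y. y \<in> {3*b - 2, 3*b, 3*b + 2} \<and> y mod 4 = r \<and> y \<notin> A)" for b
  have g: "g b \<in> {3*b - 2, 3*b, 3*b + 2} \<and> g b mod 4 = r \<and> g b \<notin> A" if "b \<in> ?core" for b
  proof -
    from that have "b \<in> A" "1 < b" "odd b" by auto
    then have "\<exists>y. y \<in> {3*b - 2, 3*b, 3*b + 2} \<and> y mod 4 = r \<and> y \<notin> A"
      by (rule propP_obtains_missing_neighbour[OF P _ _ _ r]) blast
    then show ?thesis unfolding g_def by (rule someI_ex)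
  qed
  show "inj_on g ?core"
  proof (rule inj_onI)
    fix a b assume "a \<in> ?core" "b \<in> ?core" "g a = g b"
    with g[of a] g[of b] show "a = b"
      by (intro neighbourhoods_of_multiples_of_3_disjoint[of "g a"]) auto
  qed
  show "g ` ?core \<subseteq> {x. 2*n < 3*x \<and> x \<le> n \<and> x mod 4 = r} - {x \<in> A. 2*n < 3*x \<and> x \<le> n \<and> x mod 4 = r}"
  proof (rule image_subsetI)
    fix b assume b: "b \<in> ?core"
    then have "3*b - 2 \<le> g b" "g b \<le> 3*b + 2" "g b mod 4 = r" "g b \<notin> A" using g[of b] by auto
    with b show "g b \<in> {x. 2*n < 3*x \<and> x \<le> n \<and> x mod 4 = r} - {x \<in> A. 2*n < 3*x \<and> x \<le> n \<and> x mod 4 = r}"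
      by auto
  qed
qed (auto intro: finite_subset[of _ "{..n}"])

lemma card_upper_third_residue_class_le:
  fixes n r :: nat
  shows "12 * card {x. 2*n < 3*x \<and> x \<le> n \<and> x mod 4 = r} \<le> n + 12"
proof -
  let ?m = "2*n div 3 + 1"
  have "{x. 2*n < 3*x \<and> x \<le> n \<and> x mod 4 = r} = {x. ?m \<le> x \<and> x \<le> n \<and> x mod 4 = r}" by auto
  then have "card {x. 2*n < 3*x \<and> x \<le> n \<and> x mod 4 = r} = card {x. ?m \<le> x \<and> x \<le> n \<and> x mod 4 = r}"
    by simp
  moreover have "card {x. ?m \<le> x \<and> x \<le> n \<and> x mod 4 = r} \<le> (n - ?m) div 4 + 1"
    by (rule card_residue_class_le) simp
  moreover have "12 * ((n - ?m) div 4) \<le> n" by linarith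
  ultimately show ?thesis by linarith
qed

theorem mainTheorem13:
  fixes n :: nat and A :: "nat set" and i :: int
  assumes "A \<subseteq> {1..n}" and "propP A" and "i \<in> {1, 3}"
  shows "real (card {x \<in> A. real n / 4 < real x \<and> real x \<le> real n / 3 \<and> odd x})
       + real (card {x \<in> A. 2 * real n / 3 < real x \<and> real x \<le> real n \<and> [int x = i] (mod 4)})
       \<le> real n / 12 + 3"
proof -
  from assms(3) obtain r :: nat where r: "r \<in> {1, 3}" "i = int r" by auto
  have residue: "[int x = i] (mod 4) \<longleftrightarrow> x mod 4 = r" for x
    using r cong_int_iff[of x r 4] by (auto simp: cong_def)
  have odd_part: "{x \<in> A. real n / 4 < real x \<and> real x \<le> real n / 3 \<and> odd x}
      = {x \<in> A. n < 4*x \<and> 3*x \<le> n \<and> odd x}"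
    by (auto simp: field_simps)
  have residue_part: "{x \<in> A. 2 * real n / 3 < real x \<and> real x \<le> real n \<and> [int x = i] (mod 4)}
      = {x \<in> A. 2*n < 3*x \<and> x \<le> n \<and> x mod 4 = r}"
    by (auto simp: field_simps residue)
  have "card {x \<in> A. n < 4*x \<and> 3*x \<le> n \<and> odd x}
          + card {x \<in> A. 2*n < 3*x \<and> x \<le> n \<and> x mod 4 = r}
        \<le> card {x. 2*n < 3*x \<and> x \<le> n \<and> x mod 4 = r} + 2"
    using card_odd_le_card_core_add_2[of A n] propP_card_core_le[OF assms(2) r(1), of n] by linarith
  moreover have "12 * real (card {x. 2*n < 3*x \<and> x \<le> n \<and> x mod 4 = r}) \<le> real n + 12"
    using card_upper_third_residue_class_le[of n r] by linarith
  ultimately show ?thesis unfolding odd_part residue_part by linarith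
qed

end
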